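(* Let $r\geq 3$ be an integer and $c>0$ a real number. If $G$ is a graph of order $n$ with $$e(G)>\left(\frac{r-1}{2r}+c\right)n^{2},$$ then $$k_{r+1}(G)>2c\,\frac{r}{r+1}\left(\frac{n}{r}\right)^{r+1}\qquad\text{and}\qquad js^{(2,r+1,2)}(G)>2c\left(\frac{n}{r}\right)^{r-1}.$$
   Context: All graphs are finite and simple. $e(G)$ is the number of edges of $G$ and $k_s(G)$ is the number of $s$-cliques (complete subgraphs on $s$ vertices) of $G$. For an integer $r\geq 2$, $js^{(2,r+1,2)}(G)$ (the $(2,r+1,2)$-jointsize of $G$) is the maximum, over all edges $uv$ of $G$, of the number of $(r+1)$-cliques of $G$ containing both $u$ and $v$ (and $0$ if $G$ has no edges). *)

theory Defs
  imports Main Complex_Main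
begin

definition simple_graph :: "'a set \<Rightarrow> 'a set set \<Rightarrow> bool" where
  "simple_graph V E \<longleftrightarrow> finite V \<and> (\<forall>e\<in>E. e \<subseteq> V \<and> card e = 2)"

definition num_edges :: "'a set set \<Rightarrow> nat" where
  "num_edges E = card E"

definition cliques :: "'a set \<Rightarrow> 'a set set \<Rightarrow> nat \<Rightarrow> 'a set set" where
  "cliques V E s = {S. S \<subseteq> V \<and> card S = s \<and> (\<forall>u\<in>S. \<forall>v\<in>S. u \<noteq> v \<longrightarrow> {u, v} \<in> E)}"

definition num_cliques :: "'a set \<Rightarrow> 'a set set \<Rightarrow> nat \<Rightarrow> nat" where
  "num_cliques V E s = card (cliques V E s)"

definition jointsize :: "'a set \<Rightarrow> 'a set set \<Rightarrow> nat \<Rightarrow> nat" where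
  "jointsize V E r = (if E = {} then 0
     else Max ((\<lambda>e. card {S \<in> cliques V E (r + 1). e \<subseteq> S}) ` E))"

end

theory Submission
  imports Defs "HOL-Analysis.Convex"
begin

(* Write N(T) for the common neighbourhood of a clique T and k_s for the number of s-cliques.
  Counting pairs (T, w) with w in N(T) gives sum_{T in K_s} |N(T)| = (s+1) k_{s+1}; since a vertex
  outside N(S) lies in at most one N(S - w), also sum_{T in K_s} |N(T)|^2 <= n k_{s+1} + s(s+2) k_{s+2}.
  Cauchy-Schwarz yields the Moon-Moser inequality
  ((s+1) k_{s+1})^2 <= k_s (n k_{s+1} + s(s+2) k_{s+2}).
  With b = 1 - 2e/n^2 < 1/r - 2c, induction on s gives (s+1) k_{s+1} >= n (1 - s b) k_s and
  k_s >= (r choose s) (n/r)^s for s <= r, hence (r+1) k_{r+1} > 2 c r^2 (n/r)^(r+1).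
  The jointsize bound follows because every (r+1)-clique contains (r+1 choose 2) edges
  and e <= n^2/2. *)

lemma sum_card_filter_swap:
  assumes "finite A" and "finite B"
  shows "(\<Sum>a\<in>A. card {b\<in>B. R a b}) = (\<Sum>b\<in>B. card {a\<in>A. R a b})"
  using assms by (simp add: card_eq_sum sum.inter_filter del: sum_constant) (rule sum.swap)

definition common_nbhd :: "'a set \<Rightarrow> 'a set set \<Rightarrow> 'a set \<Rightarrow> 'a set" where
  "common_nbhd V E T = {w\<in>V. \<forall>t\<in>T. {w, t} \<in> E}"

lemma finite_cliques: "simple_graph V E \<Longrightarrow> finite (cliques V E s)"
  by (rule finite_subset[of _ "Pow V"]) (auto simp: cliques_def simple_graph_def)

lemma finite_clique: "simple_graph V E \<Longrightarrow> S \<in> cliques V E s \<Longrightarrow> finite S"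
  by (auto simp: cliques_def simple_graph_def intro: finite_subset)

lemma finite_common_nbhd: "simple_graph V E \<Longrightarrow> finite (common_nbhd V E T)"
  by (simp add: simple_graph_def common_nbhd_def)

lemma finite_edges: "simple_graph V E \<Longrightarrow> finite E"
  by (rule finite_subset[of _ "Pow V"]) (auto simp: simple_graph_def)

lemma common_nbhd_disjoint: "simple_graph V E \<Longrightarrow> w \<in> common_nbhd V E T \<Longrightarrow> w \<notin> T"
  by (fastforce simp: simple_graph_def common_nbhd_def)

lemma cliques_1: "cliques V E 1 = (\<lambda>v. {v}) ` V"
  by (auto simp: cliques_def card_Suc_eq)

lemma num_cliques_1: "num_cliques V E 1 = card V"
  unfolding num_cliques_def cliques_1 by (simp add: card_image)

lemma cliques_2:
  assumes "simple_graph V E"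
  shows "cliques V E 2 = E"
proof
  show "cliques V E 2 \<subseteq> E"
    by (auto simp: cliques_def card_2_iff)
  show "E \<subseteq> cliques V E 2"
  proof
    fix S assume "S \<in> E"
    then have "S \<subseteq> V" and "card S = 2" using assms by (auto simp: simple_graph_def)
    with \<open>S \<in> E\<close> show "S \<in> cliques V E 2"
      by (auto simp: cliques_def card_2_iff insert_commute)
  qed
qed

lemma card_edges_le: "simple_graph V E \<Longrightarrow> card E \<le> card V choose 2"
  using card_mono[of "{B. B \<subseteq> V \<and> card B = 2}" E] n_subsets[of V 2]
  by (auto simp: simple_graph_def)

lemma card_edges_le_square: "simple_graph V E \<Longrightarrow> 2 * card E \<le> card V ^ 2"
proof -
  assume "simple_graph V E"
  then have "2 * card E \<le> 2 * (card V * (card V - 1) div 2)"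
    using card_edges_le by (simp add: choose_two)
  also have "\<dots> \<le> card V * (card V - 1)" by simp
  also have "\<dots> \<le> card V * card V" by simp
  finally show ?thesis by (simp add: power2_eq_square)
qed

lemma insert_common_nbhd_in_cliques:
  assumes G: "simple_graph V E" and T: "T \<in> cliques V E m" and w: "w \<in> common_nbhd V E T"
  shows "insert w T \<in> cliques V E (Suc m)"
  using T w common_nbhd_disjoint[OF G w] finite_clique[OF G T]
  by (auto simp: cliques_def common_nbhd_def insert_commute)

lemma Diff_in_cliques:
  assumes G: "simple_graph V E" and S: "S \<in> cliques V E (Suc m)" and w: "w \<in> S"
  shows "S - {w} \<in> cliques V E m" and "w \<in> common_nbhd V E (S - {w})"
  using S w finite_clique[OF G S] by (auto simp: cliques_def common_nbhd_def)

lemma bij_betw_insert_clique: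
  assumes G: "simple_graph V E"
  shows "bij_betw (\<lambda>(T, w). (insert w T, w))
           (SIGMA T:cliques V E m. common_nbhd V E T) (SIGMA S:cliques V E (Suc m). S)"
  by (rule bij_betw_byWitness[where f' = "\<lambda>(S, w). (S - {w}, w)"])
    (use common_nbhd_disjoint[OF G] insert_common_nbhd_in_cliques[OF G] Diff_in_cliques[OF G]
     in \<open>auto simp: insert_absorb\<close>)

lemma sum_cliques_common_nbhd:
  assumes G: "simple_graph V E"
  shows "(\<Sum>T\<in>cliques V E m. f T * card (common_nbhd V E T))
       = (\<Sum>S\<in>cliques V E (Suc m). \<Sum>w\<in>S. f (S - {w}) :: nat)"
proof -
  have "(\<Sum>T\<in>cliques V E m. f T * card (common_nbhd V E T))
      = (\<Sum>T\<in>cliques V E m. \<Sum>w\<in>common_nbhd V E T. f T)"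
    by (simp add: mult.commute)
  also have "\<dots> = (\<Sum>(T, w)\<in>(SIGMA T:cliques V E m. common_nbhd V E T). f T)"
    by (rule sum.Sigma) (use finite_cliques[OF G] finite_common_nbhd[OF G] in auto)
  also have "\<dots> = (\<Sum>(T, w)\<in>(SIGMA T:cliques V E m. common_nbhd V E T). f (insert w T - {w}))"
    by (rule sum.cong) (auto dest: common_nbhd_disjoint[OF G])
  also have "\<dots> = (\<Sum>(S, w)\<in>(SIGMA S:cliques V E (Suc m). S). f (S - {w}))"
    using sum.reindex_bij_betw[OF bij_betw_insert_clique[OF G], of "\<lambda>(S, w). f (S - {w})"]
    by (simp add: split_def)
  also have "\<dots> = (\<Sum>S\<in>cliques V E (Suc m). \<Sum>w\<in>S. f (S - {w}))"
    by (rule sum.Sigma[symmetric]) (use finite_cliques[OF G] finite_clique[OF G] in auto)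
  finally show ?thesis .
qed

lemma sum_card_common_nbhd:
  "simple_graph V E \<Longrightarrow>
    (\<Sum>T\<in>cliques V E m. card (common_nbhd V E T)) = Suc m * num_cliques V E (Suc m)"
  using sum_cliques_common_nbhd[of V E "\<lambda>_. 1 :: nat" m]
  by (simp add: num_cliques_def cliques_def)

lemma card_common_nbhd_Diff_le_1:
  assumes "finite S" and "x \<in> V" and "x \<notin> common_nbhd V E S"
  shows "card {w\<in>S. x \<in> common_nbhd V E (S - {w})} \<le> 1"
proof -
  have "w1 = w2" if "w1 \<in> S" "x \<in> common_nbhd V E (S - {w1})"
    and "w2 \<in> S" "x \<in> common_nbhd V E (S - {w2})" for w1 w2
  proof (rule ccontr)
    assume "w1 \<noteq> w2"
    then have "x \<in> common_nbhd V E S"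
      using that \<open>x \<in> V\<close> unfolding common_nbhd_def by blast
    with assms show False by blast
  qed
  with \<open>finite S\<close> show ?thesis by (auto simp: card_le_Suc0_iff_eq)
qed

lemma sum_card_common_nbhd_Diff_le:
  assumes G: "simple_graph V E" and S: "S \<in> cliques V E (Suc m)"
  shows "(\<Sum>w\<in>S. card (common_nbhd V E (S - {w}))) \<le> card V + m * card (common_nbhd V E S)"
proof -
  let ?N = "common_nbhd V E"
  have fV: "finite V" using G by (simp add: simple_graph_def)
  have fS: "finite S" and cS: "card S = Suc m" using finite_clique[OF G S] S by (auto simp: cliques_def)
  have "(\<Sum>w\<in>S. card (?N (S - {w}))) = (\<Sum>w\<in>S. card {x\<in>V. x \<in> ?N (S - {w})})"
    by (simp add: common_nbhd_def)
  also have "\<dots> = (\<Sum>x\<in>V. card {w\<in>S. x \<in> ?N (S - {w})})"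
    by (rule sum_card_filter_swap[OF fS fV])
  also have "\<dots> \<le> (\<Sum>x\<in>V. 1 + (if x \<in> ?N S then m else 0))"
  proof (rule sum_mono)
    fix x assume "x \<in> V"
    show "card {w\<in>S. x \<in> ?N (S - {w})} \<le> 1 + (if x \<in> ?N S then m else 0)"
    proof (cases "x \<in> ?N S")
      case True
      have "card {w\<in>S. x \<in> ?N (S - {w})} \<le> card S" by (rule card_mono[OF fS]) auto
      with True cS show ?thesis by simp
    next
      case False
      with card_common_nbhd_Diff_le_1[OF fS \<open>x \<in> V\<close> False] show ?thesis by simp
    qed
  qed
  also have "\<dots> = card V + m * card (V \<inter> ?N S)"
    using fV by (subst sum.distrib) (simp add: sum.If_cases)
  also have "V \<inter> ?N S = ?N S" by (auto simp: common_nbhd_def)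
  finally show ?thesis .
qed

theorem moon_moser_inequality:
  assumes G: "simple_graph V E"
  shows "(real (Suc m) * num_cliques V E (Suc m)) ^ 2
    \<le> num_cliques V E m * (real (card V) * num_cliques V E (Suc m) + real m * (real m + 2) * num_cliques V E (m + 2))"
proof -
  let ?N = "\<lambda>T. card (common_nbhd V E T)"
  have "(\<Sum>T\<in>cliques V E m. ?N T * ?N T) = (\<Sum>S\<in>cliques V E (Suc m). \<Sum>w\<in>S. ?N (S - {w}))"
    by (rule sum_cliques_common_nbhd[OF G])
  also have "\<dots> \<le> (\<Sum>S\<in>cliques V E (Suc m). card V + m * ?N S)"
    by (rule sum_mono) (rule sum_card_common_nbhd_Diff_le[OF G])
  also have "\<dots> = card V * num_cliques V E (Suc m) + m * ((m + 2) * num_cliques V E (m + 2))"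
    using sum_card_common_nbhd[OF G, of "Suc m"]
    by (simp add: sum.distrib num_cliques_def flip: sum_distrib_left)
  finally have "real (\<Sum>T\<in>cliques V E m. ?N T * ?N T)
      \<le> real (card V * num_cliques V E (Suc m) + m * ((m + 2) * num_cliques V E (m + 2)))"
    by (simp only: of_nat_le_iff)
  then have squares: "(\<Sum>T\<in>cliques V E m. real (?N T) ^ 2)
      \<le> real (card V) * num_cliques V E (Suc m) + real m * (real m + 2) * num_cliques V E (m + 2)"
    by (simp add: power2_eq_square algebra_simps)
  have "(real (Suc m) * num_cliques V E (Suc m)) ^ 2 = (\<Sum>T\<in>cliques V E m. real (?N T)) ^ 2"
    using sum_card_common_nbhd[OF G, of m] by (metis of_nat_mult of_nat_sum)
  also have "\<dots> \<le> (\<Sum>T\<in>cliques V E m. real (?N T) ^ 2) * num_cliques V E m"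
    unfolding num_cliques_def by (rule sum_squared_le_sum_of_squares)
  also have "\<dots> \<le> (real (card V) * num_cliques V E (Suc m) + real m * (real m + 2) * num_cliques V E (m + 2))
      * num_cliques V E m"
    by (rule mult_right_mono[OF squares]) simp
  finally show ?thesis by (simp only: mult.commute)
qed

lemma diff_times_binomial: "(n - k) * (n choose k) = Suc k * (n choose Suc k)"
  by (simp only: binomial_absorb_comp binomial_absorption)

lemma binomial_lower_bound_step:
  fixes K :: "nat \<Rightarrow> real" and n b :: real
  assumes "s < r" and "n \<ge> 0" and "real r * b \<le> 1"
    and IH: "real (r choose s) * (n / real r) ^ s \<le> K s"
    and ratio: "n * (1 - real s * b) * K s \<le> real (Suc s) * K (Suc s)"
  shows "real (r choose Suc s) * (n / real r) ^ Suc s \<le> K (Suc s)"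
proof -
  have r: "real r > 0" using \<open>s < r\<close> by simp
  have "n * (real s * (real r * b)) \<le> n * real s"
    using \<open>real r * b \<le> 1\<close> \<open>n \<ge> 0\<close> by (intro mult_left_mono) (simp_all add: mult_left_le)
  then have factor: "(real r - real s) * (n / real r) \<le> n * (1 - real s * b)"
    using r by (simp add: field_simps)
  have "0 \<le> (real r - real s) * (n / real r)" and binom_nonneg: "0 \<le> real (r choose s) * (n / real r) ^ s"
    using \<open>s < r\<close> \<open>n \<ge> 0\<close> by simp_all
  with factor have "0 \<le> n * (1 - real s * b)" by linarith
  then have "(real r - real s) * (n / real r) * (real (r choose s) * (n / real r) ^ s)
      \<le> n * (1 - real s * b) * K s"
    by (rule mult_mono[OF factor IH _ binom_nonneg])
  also note ratio
  also have "(real r - real s) * (n / real r) * (real (r choose s) * (n / real r) ^ s)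
      = real ((r - s) * (r choose s)) * (n / real r) ^ Suc s"
    using \<open>s < r\<close> by (simp add: of_nat_diff)
  finally show ?thesis by (simp only: diff_times_binomial of_nat_mult mult.assoc mult_le_cancel_left_pos)
qed

lemma clique_ratio_step:
  fixes K :: "nat \<Rightarrow> real" and n b :: real
  assumes "s \<ge> 1" and "K s > 0" and "K (Suc s) \<ge> 0"
    and MM: "(real (Suc s) * K (Suc s)) ^ 2 \<le> K s * (n * K (Suc s) + real s * (real s + 2) * K (s + 2))"
    and ratio: "n * (1 - real s * b) * K s \<le> real (Suc s) * K (Suc s)"
  shows "n * (1 - real (Suc s) * b) * K (Suc s) \<le> real (s + 2) * K (s + 2)"
proof -
  have "K s * (real (Suc s) * n * (1 - real s * b) * K (Suc s))
      = real (Suc s) * K (Suc s) * (n * (1 - real s * b) * K s)"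
    by (simp add: algebra_simps)
  also have "\<dots> \<le> (real (Suc s) * K (Suc s)) ^ 2"
    using ratio \<open>K (Suc s) \<ge> 0\<close> by (simp add: power2_eq_square mult_left_mono)
  also note MM
  finally have "real (Suc s) * n * (1 - real s * b) * K (Suc s) \<le> n * K (Suc s) + real s * (real s + 2) * K (s + 2)"
    using \<open>K s > 0\<close> by simp
  then have "real s * (n * (1 - real (Suc s) * b) * K (Suc s)) \<le> real s * (real (s + 2) * K (s + 2))"
    by (simp add: algebra_simps)
  then show ?thesis using \<open>s \<ge> 1\<close> by simp
qed

lemma clique_recurrence_lower_bounds:
  fixes K :: "nat \<Rightarrow> real" and n b :: real
  assumes "n > 0" and "real r * b \<le> 1" and K_nonneg: "\<And>s. K s \<ge> 0"
    and K1: "K 1 = n" and K2: "n * (1 - b) * K 1 \<le> 2 * K 2"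
    and MM: "\<And>s. (real (Suc s) * K (Suc s)) ^ 2
                \<le> K s * (n * K (Suc s) + real s * (real s + 2) * K (s + 2))"
    and "1 \<le> s" and "s \<le> r"
  shows "real (r choose s) * (n / real r) ^ s \<le> K s
    \<and> n * (1 - real s * b) * K s \<le> real (Suc s) * K (Suc s)"
  using \<open>1 \<le> s\<close> \<open>s \<le> r\<close>
proof (induction s rule: nat_induct_at_least)
  case base
  then show ?case using K1 K2 by (simp add: numeral_2_eq_2)
next
  case (Suc s)
  then have IH: "real (r choose s) * (n / real r) ^ s \<le> K s"
    and ratio: "n * (1 - real s * b) * K s \<le> real (Suc s) * K (Suc s)" by auto
  have "0 < real (r choose s) * (n / real r) ^ s" using \<open>n > 0\<close> \<open>Suc s \<le> r\<close> by simp
  with IH have "K s > 0" by linarith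
  show ?case
    using binomial_lower_bound_step[OF _ _ \<open>real r * b \<le> 1\<close> IH ratio]
      clique_ratio_step[OF \<open>1 \<le> s\<close> \<open>K s > 0\<close> K_nonneg MM ratio] Suc.prems \<open>n > 0\<close>
    by (simp add: numeral_2_eq_2)
qed

lemma dense_graph_nonempty:
  assumes G: "simple_graph V E" and "a \<ge> 0"
    and dense: "real (num_edges E) > a * real (card V) ^ 2"
  shows "E \<noteq> {}" and "card V > 0"
proof -
  have "a * real (card V) ^ 2 \<ge> 0" using \<open>a \<ge> 0\<close> by simp
  with dense have "card E > 0" by (simp add: num_edges_def)
  then show "E \<noteq> {}" by auto
  show "card V > 0" using \<open>card E > 0\<close> card_edges_le_square[OF G] by (cases "card V") auto
qed

lemma num_cliques_lower_bounds:
  assumes G: "simple_graph V E" and "card V > 0"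
    and b: "b = 1 - 2 * real (card E) / real (card V) ^ 2" and "real r * b \<le> 1"
    and "1 \<le> s" and "s \<le> r"
  shows "real (r choose s) * (real (card V) / real r) ^ s \<le> num_cliques V E s
    \<and> real (card V) * (1 - real s * b) * num_cliques V E s \<le> real (Suc s) * num_cliques V E (Suc s)"
proof -
  define n where "n = real (card V)"
  define K where "K s = real (num_cliques V E s)" for s
  have "n > 0" using \<open>card V > 0\<close> by (simp add: n_def)
  have K1: "K 1 = n" unfolding K_def n_def num_cliques_1 ..
  have "n * (1 - b) * n = 2 * K 2"
    using \<open>n > 0\<close> by (simp add: K_def n_def b num_cliques_def cliques_2[OF G] field_simps power2_eq_square)
  then have K2: "n * (1 - b) * K 1 \<le> 2 * K 2" unfolding K1 by simp
  have MM: "(real (Suc s) * K (Suc s)) ^ 2 \<le> K s * (n * K (Suc s) + real s * (real s + 2) * K (s + 2))" for s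
    using moon_moser_inequality[OF G] by (simp add: K_def n_def)
  from clique_recurrence_lower_bounds[OF \<open>n > 0\<close> \<open>real r * b \<le> 1\<close> _ K1 K2 MM \<open>1 \<le> s\<close> \<open>s \<le> r\<close>]
  show ?thesis by (simp add: K_def n_def)
qed

theorem num_cliques_Suc_gt:
  assumes G: "simple_graph V E" and "r \<ge> 1" and "c \<ge> 0"
    and dense: "real (num_edges E) > ((real r - 1) / (2 * real r) + c) * real (card V) ^ 2"
  shows "real (Suc r) * num_cliques V E (Suc r) > 2 * c * real r ^ 2 * (real (card V) / real r) ^ (r + 1)"
proof -
  define n where "n = real (card V)"
  define b where "b = 1 - 2 * real (card E) / n ^ 2"
  have r: "real r > 0" using \<open>r \<ge> 1\<close> by simp
  have "card V > 0"
    using dense_graph_nonempty(2)[OF G _ dense] \<open>r \<ge> 1\<close> \<open>c \<ge> 0\<close> by simp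
  then have "n > 0" by (simp add: n_def)
  have "real (card E) > ((real r - 1) / (2 * real r) + c) * n ^ 2"
    using dense by (simp add: num_edges_def n_def)
  moreover have "((real r - 1) / real r + 2 * c) * n ^ 2 = 2 * (((real r - 1) / (2 * real r) + c) * n ^ 2)"
    using r by (simp add: field_simps)
  ultimately have "2 * real (card E) / n ^ 2 > (real r - 1) / real r + 2 * c"
    using \<open>n > 0\<close> by (simp add: field_simps)
  then have rb: "1 - real r * b > 2 * c * real r"
    using r by (simp add: b_def field_simps)
  have "0 \<le> 2 * c * real r" using \<open>c \<ge> 0\<close> by simp
  with rb have "real r * b \<le> 1" and "0 \<le> 1 - real r * b" by linarith+
  from num_cliques_lower_bounds[OF G \<open>card V > 0\<close> b_def[unfolded n_def] this(1) \<open>r \<ge> 1\<close> order_refl]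
  have Kr: "(n / real r) ^ r \<le> num_cliques V E r"
    and ratio: "n * (1 - real r * b) * num_cliques V E r \<le> real (Suc r) * num_cliques V E (Suc r)"
    by (simp_all add: n_def)
  have "2 * c * real r ^ 2 * (n / real r) ^ (r + 1) = n * (2 * c * real r) * (n / real r) ^ r"
    using r by (simp add: field_simps power2_eq_square)
  also have "\<dots> < n * (1 - real r * b) * (n / real r) ^ r"
    using rb \<open>n > 0\<close> r by simp
  also have "\<dots> \<le> n * (1 - real r * b) * num_cliques V E r"
    using Kr \<open>0 \<le> 1 - real r * b\<close> \<open>n > 0\<close> by (intro mult_left_mono) simp_all
  also note ratio
  finally show ?thesis by (simp add: n_def)
qed

lemma card_edges_in_clique:
  assumes G: "simple_graph V E" and S: "S \<in> cliques V E s"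
  shows "card {e\<in>E. e \<subseteq> S} = s choose 2"
proof -
  have "{e\<in>E. e \<subseteq> S} = {B. B \<subseteq> S \<and> card B = 2}"
    using G S by (auto simp: simple_graph_def cliques_def card_2_iff)
  with S n_subsets[OF finite_clique[OF G S]] show ?thesis by (simp add: cliques_def)
qed

lemma num_cliques_mult_choose_le_jointsize:
  assumes G: "simple_graph V E" and "E \<noteq> {}"
  shows "num_cliques V E (Suc r) * (Suc r choose 2) \<le> card E * jointsize V E r"
proof -
  let ?Cl = "cliques V E (Suc r)"
  let ?f = "\<lambda>e. card {S \<in> ?Cl. e \<subseteq> S}"
  have "num_cliques V E (Suc r) * (Suc r choose 2) = (\<Sum>S\<in>?Cl. card {e\<in>E. e \<subseteq> S})"
    by (simp add: num_cliques_def card_edges_in_clique[OF G])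
  also have "\<dots> = (\<Sum>e\<in>E. ?f e)"
    by (rule sum_card_filter_swap[OF finite_cliques[OF G] finite_edges[OF G]])
  also have "\<dots> \<le> (\<Sum>e\<in>E. Max (?f ` E))"
    by (rule sum_mono) (simp add: finite_edges[OF G])
  finally show ?thesis using \<open>E \<noteq> {}\<close> by (simp add: jointsize_def)
qed

lemma jointsize_lower_bound:
  assumes G: "simple_graph V E" and "E \<noteq> {}"
  shows "real r * real (Suc r) * num_cliques V E (Suc r) \<le> real (card V) ^ 2 * jointsize V E r"
proof -
  have "r * Suc r * num_cliques V E (Suc r) = 2 * (num_cliques V E (Suc r) * (Suc r choose 2))"
    by (simp add: choose_two)
  also have "\<dots> \<le> 2 * card E * jointsize V E r"
    using num_cliques_mult_choose_le_jointsize[OF assms] by simp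
  also have "\<dots> \<le> card V ^ 2 * jointsize V E r"
    using card_edges_le_square[OF G] by (rule mult_right_mono) simp
  finally have "real (r * Suc r * num_cliques V E (Suc r)) \<le> real (card V ^ 2 * jointsize V E r)"
    by (simp only: of_nat_le_iff)
  then show ?thesis by (simp add: algebra_simps)
qed

lemma jointsize_gt_of_num_cliques_gt:
  assumes G: "simple_graph V E" and "E \<noteq> {}" and "card V > 0" and "r \<ge> 1"
    and gt: "real (Suc r) * num_cliques V E (Suc r) > a * real r ^ 2 * (real (card V) / real r) ^ (r + 1)"
  shows "real (jointsize V E r) > a * real r * (real (card V) / real r) ^ (r - 1)"
proof -
  define n where "n = real (card V)"
  have r: "real r > 0" and "n > 0" using \<open>r \<ge> 1\<close> \<open>card V > 0\<close> by (simp_all add: n_def)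
  have "(n / real r) ^ (r + 1) = (n / real r) ^ (r - 1) * (n / real r) ^ 2"
    using \<open>r \<ge> 1\<close> by (simp flip: power_add)
  then have "n ^ 2 * (a * real r * (n / real r) ^ (r - 1)) = real r * (a * real r ^ 2 * (n / real r) ^ (r + 1))"
    using r by (simp add: power_divide power2_eq_square)
  also have "\<dots> < real r * (real (Suc r) * num_cliques V E (Suc r))"
    using gt r by (intro mult_strict_left_mono) (simp_all add: n_def)
  also have "\<dots> \<le> n ^ 2 * jointsize V E r"
    using jointsize_lower_bound[OF G \<open>E \<noteq> {}\<close>] by (simp add: n_def mult.assoc)
  finally show ?thesis using \<open>n > 0\<close> by (simp add: n_def)
qed

theorem lemma1:
  fixes V :: "'a set" and E :: "'a set set" and r :: nat and c :: real
  assumes "simple_graph V E"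
    and "r \<ge> 3"
    and "c > 0"
    and "real (num_edges E) > ((real r - 1) / (2 * real r) + c) * (real (card V))^2"
  shows "real (num_cliques V E (r + 1)) > 2 * c * (real r / (real r + 1)) * (real (card V) / real r) ^ (r + 1)
       \<and> real (jointsize V E r) > 2 * c * (real (card V) / real r) ^ (r - 1)"
proof
  have r: "real r \<ge> 3" using \<open>r \<ge> 3\<close> by simp
  have "E \<noteq> {}" and "card V > 0"
    using dense_graph_nonempty[OF assms(1) _ assms(4)] r \<open>c > 0\<close> by simp_all
  have main: "real (Suc r) * num_cliques V E (Suc r) > 2 * c * real r ^ 2 * (real (card V) / real r) ^ (r + 1)"
    using num_cliques_Suc_gt[OF assms(1) _ _ assms(4)] \<open>r \<ge> 3\<close> \<open>c > 0\<close> by simp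
  define X where "X = (real (card V) / real r) ^ (r + 1)"
  have "2 * c * real r * X \<le> 2 * c * real r ^ 2 * X"
    using r \<open>c > 0\<close> by (intro mult_right_mono) (simp_all add: X_def power2_eq_square)
  with main[folded X_def] have "2 * c * real r * X < real (Suc r) * num_cliques V E (Suc r)"
    by linarith
  then have "2 * c * real r * X / real (Suc r) < num_cliques V E (Suc r)"
    by (simp only: pos_divide_less_eq of_nat_0_less_iff zero_less_Suc mult.commute)
  then have "2 * c * (real r / (real r + 1)) * X < num_cliques V E (Suc r)"
    by (simp add: field_simps)
  then show "real (num_cliques V E (r + 1)) > 2 * c * (real r / (real r + 1)) * (real (card V) / real r) ^ (r + 1)"
    by (simp add: X_def)
  have "0 \<le> 2 * c * (real (card V) / real r) ^ (r - 1)" using \<open>c > 0\<close> by simp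
  then have "2 * c * (real (card V) / real r) ^ (r - 1) \<le> real r * (2 * c * (real (card V) / real r) ^ (r - 1))"
    using r by (simp add: mult_le_cancel_right1)
  also have "\<dots> = 2 * c * real r * (real (card V) / real r) ^ (r - 1)" by simp
  also have "\<dots> < real (jointsize V E r)"
    using jointsize_gt_of_num_cliques_gt[OF assms(1) \<open>E \<noteq> {}\<close> \<open>card V > 0\<close> _ main] \<open>r \<ge> 3\<close> by simp
  finally show "real (jointsize V E r) > 2 * c * (real (card V) / real r) ^ (r - 1)" .
qed

end
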